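(* Let $g_4(a,b,c,d)=S^4_3+3S^4_{1,1,1}-T^4_{2,1}$. Then $g_4(a^2,b^2,c^2,d^2)\in\mathcal{E}(\mathcal{P}_{4,6})\setminus\Sigma_{4,6}$, and $g_4\in\mathcal{E}(\mathcal{P}^+_{4,3})$.
   Context: Variables $a,b,c,d$ (also $x_1,\dots,x_4$). $S^4_3=\sum_i x_i^3$, $T^4_{2,1}=\sum_{i}x_i^2\sum_{j\ne i}x_j$, $S^4_{1,1,1}=bcd+acd+abd+abc$. $\mathcal{P}_{4,6}$ is the cone of real homogeneous sextic forms in $a,b,c,d$ that are nonnegative on $\mathbb{R}^4$, $\Sigma_{4,6}\subset\mathcal{P}_{4,6}$ the cone of sums of squares of real cubic forms. $\mathcal{P}^+_{4,3}$ is the cone of all real homogeneous cubic forms in $a,b,c,d$ nonnegative on $\mathbb{R}_{\ge0}^4$. For a closed convex cone $\mathcal{P}$, $f\in\mathcal{P}\setminus\{0\}$ is extremal if $f=g+h$ with $g,h\in\mathcal{P}$ forces $g,h\in\mathbb{R}_{\ge0}f$; $\mathcal{E}(\mathcal{P})$ is the set of extremal elements. *)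

theory Defs
  imports Main Complex_Main
begin

text \<open>Real quaternary forms are represented by their polynomial functions
  \<open>real \<Rightarrow> real \<Rightarrow> real \<Rightarrow> real \<Rightarrow> real\<close> (variables a b c d). Over the
  reals a polynomial is determined by its function, so this is faithful.\<close>

definition monomials_deg :: "nat \<Rightarrow> (nat \<times> nat \<times> nat \<times> nat) set" where
  "monomials_deg n = {(i,j,k,l). i + j + k + l = n}"

definition is_form :: "nat \<Rightarrow> (real \<Rightarrow> real \<Rightarrow> real \<Rightarrow> real \<Rightarrow> real) \<Rightarrow> bool" where
  "is_form n p \<longleftrightarrow> (\<exists>coef :: nat \<times> nat \<times> nat \<times> nat \<Rightarrow> real.
     \<forall>a b c d. p a b c d =
       (\<Sum>(i,j,k,l)\<in>monomials_deg n. coef (i,j,k,l) * a^i * b^j * c^k * d^l))"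

definition P46 :: "(real \<Rightarrow> real \<Rightarrow> real \<Rightarrow> real \<Rightarrow> real) set" where
  "P46 = {p. is_form 6 p \<and> (\<forall>a b c d. 0 \<le> p a b c d)}"

definition Sigma46 :: "(real \<Rightarrow> real \<Rightarrow> real \<Rightarrow> real \<Rightarrow> real) set" where
  "Sigma46 = {p. \<exists>qs. (\<forall>q\<in>set qs. is_form 3 q) \<and>
                  p = (\<lambda>a b c d. \<Sum>q\<leftarrow>qs. (q a b c d)^2)}"

definition P43plus :: "(real \<Rightarrow> real \<Rightarrow> real \<Rightarrow> real \<Rightarrow> real) set" where
  "P43plus = {p. is_form 3 p \<and>
     (\<forall>a b c d. 0 \<le> a \<longrightarrow> 0 \<le> b \<longrightarrow> 0 \<le> c \<longrightarrow> 0 \<le> d \<longrightarrow> 0 \<le> p a b c d)}"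

definition extremals :: "(real \<Rightarrow> real \<Rightarrow> real \<Rightarrow> real \<Rightarrow> real) set
    \<Rightarrow> (real \<Rightarrow> real \<Rightarrow> real \<Rightarrow> real \<Rightarrow> real) set" where
  "extremals K = {f. f \<in> K \<and> f \<noteq> (\<lambda>a b c d. 0) \<and>
     (\<forall>g h. g \<in> K \<longrightarrow> h \<in> K \<longrightarrow> f = (\<lambda>a b c d. g a b c d + h a b c d) \<longrightarrow>
        (\<exists>t\<ge>0. g = (\<lambda>a b c d. t * f a b c d)) \<and> (\<exists>t\<ge>0. h = (\<lambda>a b c d. t * f a b c d)))}"

definition S3 :: "real \<Rightarrow> real \<Rightarrow> real \<Rightarrow> real \<Rightarrow> real" where
  "S3 a b c d = a^3 + b^3 + c^3 + d^3"

definition S111 :: "real \<Rightarrow> real \<Rightarrow> real \<Rightarrow> real \<Rightarrow> real" where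
  "S111 a b c d = b*c*d + a*c*d + a*b*d + a*b*c"

definition T21 :: "real \<Rightarrow> real \<Rightarrow> real \<Rightarrow> real \<Rightarrow> real" where
  "T21 a b c d = a^2*(b+c+d) + b^2*(a+c+d) + c^2*(a+b+d) + d^2*(a+b+c)"

definition g4 :: "real \<Rightarrow> real \<Rightarrow> real \<Rightarrow> real \<Rightarrow> real" where
  "g4 a b c d = S3 a b c d + 3 * S111 a b c d - T21 a b c d"

end

theory Submission
  imports Defs
begin

(*
  Shifting all variables by the smallest one, say d, turns g4 into Schur's ternary cubic plus
  terms with nonnegative coefficients, so g4 is nonnegative on the orthant and
  f = g4(a^2,b^2,c^2,d^2) is a nonnegative sextic.

  Up to sign, f vanishes at the 28 points with two or three coordinates equal to +-1 and the
  others 0.  If f = g + h with g, h nonnegative, then g vanishes at these points, and so does its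
  gradient since they are minima.  These linear conditions leave a one-dimensional space of
  sextics: on the coordinate hyperplane a = 0 the ternary part is pinned down by the ten zeros
  there, the symmetry of g4 transports this to the other hyperplanes, and the derivatives
  transversal to the hyperplanes fix the ten monomials involving all four variables.  Hence g is
  a multiple of f.  The same argument applied to g(a^2,b^2,c^2,d^2) gives the extremality of g4
  among cubics nonnegative on the orthant.

  Finally, a cubic vanishing at the 28 zeros of f also vanishes at (1,0,0,0), where f = 1; so f
  is not a sum of squares of cubics.
*)

lemma monomials_deg_eq:
  "monomials_deg n = (\<lambda>(i,j,k). (i, j, k, n-i-j-k)) ` (SIGMA i:{..n}. SIGMA j:{..n-i}. {..n-i-j})"
  unfolding monomials_deg_def by (auto simp: image_iff)

lemma finite_monomials_deg: "finite (monomials_deg n)"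
  by (simp add: monomials_deg_eq)

lemma sum_monomials_deg:
  "(\<Sum>m\<in>monomials_deg n. F m) = (\<Sum>i\<le>n. \<Sum>j\<le>n-i. \<Sum>k\<le>n-i-j. F (i, j, k, n-i-j-k))"
proof -
  have "inj_on (\<lambda>(i,j,k). (i, j, k, n-i-j-k)) (SIGMA i:{..n}. SIGMA j:{..n-i}. {..n-i-j})"
    by (auto simp: inj_on_def)
  then show ?thesis
    by (simp add: monomials_deg_eq sum.reindex sum.Sigma split_def)
qed

lemma ball_monomials_deg:
  "(\<forall>m\<in>monomials_deg n. P m) \<longleftrightarrow> (\<forall>i\<in>{..n}. \<forall>j\<in>{..n-i}. \<forall>k\<in>{..n-i-j}. P (i, j, k, n-i-j-k))"
  by (auto simp: monomials_deg_eq)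

lemma sum_monomials_deg_swap12:
  "(\<Sum>(i,j,k,l)\<in>monomials_deg n. F i j k l) = (\<Sum>(i,j,k,l)\<in>monomials_deg n. F j i k l)"
  by (rule sum.reindex_bij_witness[of _ "\<lambda>(i,j,k,l). (j,i,k,l)" "\<lambda>(i,j,k,l). (j,i,k,l)"])
     (auto simp: monomials_deg_def)

lemma sum_monomials_deg_swap13:
  "(\<Sum>(i,j,k,l)\<in>monomials_deg n. F i j k l) = (\<Sum>(i,j,k,l)\<in>monomials_deg n. F k j i l)"
  by (rule sum.reindex_bij_witness[of _ "\<lambda>(i,j,k,l). (k,j,i,l)" "\<lambda>(i,j,k,l). (k,j,i,l)"])
     (auto simp: monomials_deg_def)

lemma sum_monomials_deg_swap14:
  "(\<Sum>(i,j,k,l)\<in>monomials_deg n. F i j k l) = (\<Sum>(i,j,k,l)\<in>monomials_deg n. F l j k i)"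
  by (rule sum.reindex_bij_witness[of _ "\<lambda>(i,j,k,l). (l,j,k,i)" "\<lambda>(i,j,k,l). (l,j,k,i)"])
     (auto simp: monomials_deg_def)

definition sq_coeff :: "(nat \<times> nat \<times> nat \<times> nat \<Rightarrow> real) \<Rightarrow> nat \<times> nat \<times> nat \<times> nat \<Rightarrow> real" where
  "sq_coeff cf = (\<lambda>(i,j,k,l).
     if even i \<and> even j \<and> even k \<and> even l then cf (i div 2, j div 2, k div 2, l div 2) else 0)"

lemma sum_sq_coeff:
  "(\<Sum>(i,j,k,l)\<in>monomials_deg (2*n). sq_coeff cf (i,j,k,l) * a^i * b^j * c^k * d^l)
   = (\<Sum>(i,j,k,l)\<in>monomials_deg n. cf (i,j,k,l) * (a^2)^i * (b^2)^j * (c^2)^k * (d^2)^l)"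
proof -
  let ?double = "\<lambda>(i,j,k,l). (2*i, 2*j, 2*k, 2*l)"
  have "(\<Sum>(i,j,k,l)\<in>monomials_deg (2*n). sq_coeff cf (i,j,k,l) * a^i * b^j * c^k * d^l)
      = (\<Sum>(i,j,k,l)\<in>?double ` monomials_deg n. sq_coeff cf (i,j,k,l) * a^i * b^j * c^k * d^l)"
  proof (rule sum.mono_neutral_right)
    show "?double ` monomials_deg n \<subseteq> monomials_deg (2*n)"
      by (auto simp: monomials_deg_def)
    have "sq_coeff cf (i,j,k,l) = 0"
      if "(i,j,k,l) \<in> monomials_deg (2*n)" "(i,j,k,l) \<notin> ?double ` monomials_deg n" for i j k l
      using that by (auto simp: monomials_deg_def sq_coeff_def image_iff elim!: evenE) presburger
    then show "\<forall>m\<in>monomials_deg (2*n) - ?double ` monomials_deg n.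
        (case m of (i,j,k,l) \<Rightarrow> sq_coeff cf (i,j,k,l) * a^i * b^j * c^k * d^l) = 0"
      by auto
  qed (rule finite_monomials_deg)
  also have "\<dots> = (\<Sum>(i,j,k,l)\<in>monomials_deg n. cf (i,j,k,l) * (a^2)^i * (b^2)^j * (c^2)^k * (d^2)^l)"
    by (subst sum.reindex) (auto simp: inj_on_def sq_coeff_def power_mult intro!: sum.cong)
  finally show ?thesis .
qed

lemma is_form_squares:
  assumes "is_form n p"
  shows "is_form (2*n) (\<lambda>a b c d. p (a^2) (b^2) (c^2) (d^2))"
proof -
  obtain cf where "\<forall>a b c d. p a b c d = (\<Sum>(i,j,k,l)\<in>monomials_deg n. cf (i,j,k,l) * a^i * b^j * c^k * d^l)"
    using assms unfolding is_form_def by blast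
  then show ?thesis
    unfolding is_form_def by (intro exI[of _ "sq_coeff cf"]) (simp add: sum_sq_coeff)
qed

lemma nonneg_polyfun_deriv_zero:
  fixes f :: "real \<Rightarrow> real" and x :: real and w :: "'m \<Rightarrow> real" and e :: "'m \<Rightarrow> nat"
  assumes poly: "\<And>y. f y = (\<Sum>m\<in>S. w m * y ^ e m)"
    and nonneg: "\<And>y. 0 \<le> f y" and zero: "f x = 0"
  shows "(\<Sum>m\<in>S. w m * (real (e m) * x ^ (e m - 1))) = 0"
proof -
  have "(f has_real_derivative (\<Sum>m\<in>S. w m * (real (e m) * x ^ (e m - 1)))) (at x)"
    unfolding poly[abs_def] by (auto intro!: derivative_eq_intros sum.cong simp: mult_ac)
  then show ?thesis
    by (rule DERIV_local_min[of _ _ _ 1]) (use nonneg zero in auto)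
qed

lemma nonneg_form_grad_zero:
  fixes g :: "real \<Rightarrow> real \<Rightarrow> real \<Rightarrow> real \<Rightarrow> real" and cf :: "nat \<times> nat \<times> nat \<times> nat \<Rightarrow> real"
  assumes G: "\<And>a b c d. g a b c d = (\<Sum>(i,j,k,l)\<in>M. cf (i,j,k,l) * a^i * b^j * c^k * d^l)"
    and nonneg: "\<And>a b c d. 0 \<le> g a b c d" and zero: "g x1 x2 x3 x4 = 0"
  shows "(\<Sum>(i,j,k,l)\<in>M. cf (i,j,k,l) * (i * x1^(i-1)) * x2^j * x3^k * x4^l) = 0"
    and "(\<Sum>(i,j,k,l)\<in>M. cf (i,j,k,l) * x1^i * (j * x2^(j-1)) * x3^k * x4^l) = 0"
    and "(\<Sum>(i,j,k,l)\<in>M. cf (i,j,k,l) * x1^i * x2^j * (k * x3^(k-1)) * x4^l) = 0"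
    and "(\<Sum>(i,j,k,l)\<in>M. cf (i,j,k,l) * x1^i * x2^j * x3^k * (l * x4^(l-1))) = 0"
proof -
  have "g y x2 x3 x4 = (\<Sum>m\<in>M. (case m of (i,j,k,l) \<Rightarrow> cf (i,j,k,l) * x2^j * x3^k * x4^l) * y ^ fst m)" for y
    by (simp add: G split_def mult_ac)
  from nonneg_polyfun_deriv_zero[OF this nonneg zero]
  show "(\<Sum>(i,j,k,l)\<in>M. cf (i,j,k,l) * (i * x1^(i-1)) * x2^j * x3^k * x4^l) = 0"
    by (simp add: split_def mult_ac)
  have "g x1 y x3 x4 = (\<Sum>m\<in>M. (case m of (i,j,k,l) \<Rightarrow> cf (i,j,k,l) * x1^i * x3^k * x4^l) * y ^ fst (snd m))" for y
    by (simp add: G split_def mult_ac)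
  from nonneg_polyfun_deriv_zero[OF this nonneg zero]
  show "(\<Sum>(i,j,k,l)\<in>M. cf (i,j,k,l) * x1^i * (j * x2^(j-1)) * x3^k * x4^l) = 0"
    by (simp add: split_def mult_ac)
  have "g x1 x2 y x4 = (\<Sum>m\<in>M. (case m of (i,j,k,l) \<Rightarrow> cf (i,j,k,l) * x1^i * x2^j * x4^l) * y ^ fst (snd (snd m)))" for y
    by (simp add: G split_def mult_ac)
  from nonneg_polyfun_deriv_zero[OF this nonneg zero]
  show "(\<Sum>(i,j,k,l)\<in>M. cf (i,j,k,l) * x1^i * x2^j * (k * x3^(k-1)) * x4^l) = 0"
    by (simp add: split_def mult_ac)
  have "g x1 x2 x3 y = (\<Sum>m\<in>M. (case m of (i,j,k,l) \<Rightarrow> cf (i,j,k,l) * x1^i * x2^j * x3^k) * y ^ snd (snd (snd m)))" for y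
    by (simp add: G split_def mult_ac)
  from nonneg_polyfun_deriv_zero[OF this nonneg zero]
  show "(\<Sum>(i,j,k,l)\<in>M. cf (i,j,k,l) * x1^i * x2^j * x3^k * (l * x4^(l-1))) = 0"
    by (simp add: split_def mult_ac)
qed

definition schur :: "real \<Rightarrow> real \<Rightarrow> real \<Rightarrow> real" where
  "schur x y z = x * (x-y) * (x-z) + y * (y-x) * (y-z) + z * (z-x) * (z-y)"

lemma schur_nonneg_ordered:
  assumes "0 \<le> z" "z \<le> y" "y \<le> x"
  shows "0 \<le> schur x y z"
proof -
  have "schur x y z = (x-y)^2 * (x+y-z) + z * ((x-z) * (y-z))"
    unfolding schur_def power2_eq_square by (simp add: algebra_simps)
  then show ?thesis
    using assms by (simp add: add_nonneg_nonneg mult_nonneg_nonneg)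
qed

lemma schur_nonneg:
  assumes "0 \<le> x" "0 \<le> y" "0 \<le> z"
  shows "0 \<le> schur x y z"
proof -
  have "schur u v w = schur v u w" "schur u v w = schur u w v" for u v w
    unfolding schur_def by (simp_all add: algebra_simps)
  then show ?thesis
    using assms schur_nonneg_ordered[of z y x] schur_nonneg_ordered[of y z x] schur_nonneg_ordered[of z x y]
      schur_nonneg_ordered[of x z y] schur_nonneg_ordered[of y x z] schur_nonneg_ordered[of x y z]
    by (metis linear)
qed

lemmas g4_defs = g4_def S3_def S111_def T21_def

lemma g4_swap12: "g4 b a c d = g4 a b c d"
  and g4_swap13: "g4 c b a d = g4 a b c d"
  and g4_swap14: "g4 d b c a = g4 a b c d"
  by (simp_all add: g4_defs algebra_simps)

lemma g4_shift:
  "g4 (d+x) (d+y) (d+z) d = schur x y z + 4*d^3 + 3*d^2*(x+y+z) + 2*d*(x*y + y*z + z*x)"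
  unfolding g4_defs schur_def power2_eq_square power3_eq_cube by (simp add: algebra_simps)

lemma g4_nonneg_min_last:
  assumes "0 \<le> d" "d \<le> a" "d \<le> b" "d \<le> c"
  shows "0 \<le> g4 a b c d"
  using g4_shift[of d "a-d" "b-d" "c-d"] schur_nonneg[of "a-d" "b-d" "c-d"] assms
  by (simp add: add_nonneg_nonneg mult_nonneg_nonneg)

lemma g4_nonneg:
  assumes "0 \<le> a" "0 \<le> b" "0 \<le> c" "0 \<le> d"
  shows "0 \<le> g4 a b c d"
proof -
  consider "d \<le> a" "d \<le> b" "d \<le> c" | "c \<le> a" "c \<le> b" "c \<le> d" | "b \<le> a" "b \<le> c" "b \<le> d"
    | "a \<le> b" "a \<le> c" "a \<le> d"
    by linarith
  then show ?thesis
    by cases (use assms g4_nonneg_min_last g4_swap12 g4_swap13 g4_swap14 in metis)+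
qed

text \<open>On cubic monomials: \<open>a^3\<close> has coefficient 1 (from S3), \<open>a^2*b\<close> has -1 (from T21) and
  \<open>a*b*c\<close> has 3 (from 3 S111).\<close>

definition g4_coeff :: "nat \<times> nat \<times> nat \<times> nat \<Rightarrow> real" where
  "g4_coeff = (\<lambda>(i,j,k,l). if 3 \<in> {i,j,k,l} then 1 else if 2 \<in> {i,j,k,l} then -1 else 3)"

lemma g4_eq_sum:
  "g4 a b c d = (\<Sum>(i,j,k,l)\<in>monomials_deg 3. g4_coeff (i,j,k,l) * a^i * b^j * c^k * d^l)"
  by (simp add: sum_monomials_deg atMost_nat_numeral atMost_Suc g4_coeff_def g4_defs)
     (simp add: algebra_simps power2_eq_square power3_eq_cube)

lemma g4_sq_eq_sum:
  "g4 (a^2) (b^2) (c^2) (d^2)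
   = (\<Sum>(i,j,k,l)\<in>monomials_deg 6. sq_coeff g4_coeff (i,j,k,l) * a^i * b^j * c^k * d^l)"
  using sum_sq_coeff[where cf=g4_coeff and n=3] by (simp add: g4_eq_sum)

lemma sq_coeff_g4_coeff_swap:
  "sq_coeff g4_coeff (j,i,k,l) = sq_coeff g4_coeff (i,j,k,l)"
  "sq_coeff g4_coeff (k,j,i,l) = sq_coeff g4_coeff (i,j,k,l)"
  "sq_coeff g4_coeff (l,j,k,i) = sq_coeff g4_coeff (i,j,k,l)"
  by (auto simp: sq_coeff_def g4_coeff_def insert_commute)

definition nonneg_sextic_with_g4_sq_zeros ::
    "(real \<Rightarrow> real \<Rightarrow> real \<Rightarrow> real \<Rightarrow> real) \<Rightarrow> (nat \<times> nat \<times> nat \<times> nat \<Rightarrow> real) \<Rightarrow> bool" where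
  "nonneg_sextic_with_g4_sq_zeros g cf \<longleftrightarrow>
     (\<forall>a b c d. g a b c d = (\<Sum>(i,j,k,l)\<in>monomials_deg 6. cf (i,j,k,l) * a^i * b^j * c^k * d^l)) \<and>
     (\<forall>a b c d. 0 \<le> g a b c d) \<and>
     (\<forall>a b c d. g4 (a^2) (b^2) (c^2) (d^2) = 0 \<longrightarrow> g a b c d = 0)"

lemma nonneg_sextic_with_g4_sq_zerosD:
  assumes "nonneg_sextic_with_g4_sq_zeros g cf"
  shows "g a b c d = (\<Sum>(i,j,k,l)\<in>monomials_deg 6. cf (i,j,k,l) * a^i * b^j * c^k * d^l)"
    and "0 \<le> g a b c d"
    and "g4 (a^2) (b^2) (c^2) (d^2) = 0 \<Longrightarrow> g a b c d = 0"
  using assms unfolding nonneg_sextic_with_g4_sq_zeros_def by blast+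

lemma nonneg_sextic_with_g4_sq_zeros_swap:
  assumes "nonneg_sextic_with_g4_sq_zeros g cf"
  shows "nonneg_sextic_with_g4_sq_zeros (\<lambda>a b c d. g b a c d) (\<lambda>(i,j,k,l). cf (j,i,k,l))"
    and "nonneg_sextic_with_g4_sq_zeros (\<lambda>a b c d. g c b a d) (\<lambda>(i,j,k,l). cf (k,j,i,l))"
    and "nonneg_sextic_with_g4_sq_zeros (\<lambda>a b c d. g d b c a) (\<lambda>(i,j,k,l). cf (l,j,k,i))"
proof -
  note G = nonneg_sextic_with_g4_sq_zerosD(1)[OF assms]
    and nonneg = nonneg_sextic_with_g4_sq_zerosD(2)[OF assms]
    and zeros = nonneg_sextic_with_g4_sq_zerosD(3)[OF assms]
  show "nonneg_sextic_with_g4_sq_zeros (\<lambda>a b c d. g b a c d) (\<lambda>(i,j,k,l). cf (j,i,k,l))"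
    unfolding nonneg_sextic_with_g4_sq_zeros_def
  proof (intro conjI allI impI)
    fix a b c d
    show "g b a c d = (\<Sum>(i,j,k,l)\<in>monomials_deg 6. (\<lambda>(i,j,k,l). cf (j,i,k,l)) (i,j,k,l) * a^i * b^j * c^k * d^l)"
      unfolding G by (subst sum_monomials_deg_swap12) (simp add: mult_ac)
    show "0 \<le> g b a c d"
      by (rule nonneg)
    show "g b a c d = 0" if "g4 (a^2) (b^2) (c^2) (d^2) = 0"
      using zeros that g4_swap12 by metis
  qed
  show "nonneg_sextic_with_g4_sq_zeros (\<lambda>a b c d. g c b a d) (\<lambda>(i,j,k,l). cf (k,j,i,l))"
    unfolding nonneg_sextic_with_g4_sq_zeros_def
  proof (intro conjI allI impI)
    fix a b c d
    show "g c b a d = (\<Sum>(i,j,k,l)\<in>monomials_deg 6. (\<lambda>(i,j,k,l). cf (k,j,i,l)) (i,j,k,l) * a^i * b^j * c^k * d^l)"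
      unfolding G by (subst sum_monomials_deg_swap13) (simp add: mult_ac)
    show "0 \<le> g c b a d"
      by (rule nonneg)
    show "g c b a d = 0" if "g4 (a^2) (b^2) (c^2) (d^2) = 0"
      using zeros that g4_swap13 by metis
  qed
  show "nonneg_sextic_with_g4_sq_zeros (\<lambda>a b c d. g d b c a) (\<lambda>(i,j,k,l). cf (l,j,k,i))"
    unfolding nonneg_sextic_with_g4_sq_zeros_def
  proof (intro conjI allI impI)
    fix a b c d
    show "g d b c a = (\<Sum>(i,j,k,l)\<in>monomials_deg 6. (\<lambda>(i,j,k,l). cf (l,j,k,i)) (i,j,k,l) * a^i * b^j * c^k * d^l)"
      unfolding G by (subst sum_monomials_deg_swap14) (simp add: mult_ac)
    show "0 \<le> g d b c a"
      by (rule nonneg)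
    show "g d b c a = 0" if "g4 (a^2) (b^2) (c^2) (d^2) = 0"
      using zeros that g4_swap14 by metis
  qed
qed

lemma nonneg_sextic_coeffs_a_free:
  assumes "nonneg_sextic_with_g4_sq_zeros g cf" and "j + k + l = 6"
  shows "cf (0,j,k,l) = cf (0,0,0,6) * sq_coeff g4_coeff (0,j,k,l)"
proof -
  note grad = nonneg_form_grad_zero(2-4)[OF nonneg_sextic_with_g4_sq_zerosD[OF assms(1)]]
  note [simp] = g4_defs sum_monomials_deg atMost_nat_numeral atMost_Suc
  \<comment> \<open>the zeros of \<open>g4 (a^2) (b^2) (c^2) (d^2)\<close> with \<open>a = 0\<close>, up to sign\<close>
  note eqs = grad[of 0 0 1 "-1"] grad[of 0 0 1 1] grad[of 0 1 "-1" "-1"] grad[of 0 1 "-1" 0] grad[of 0 1 "-1" 1]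
      grad[of 0 1 0 "-1"] grad[of 0 1 0 1] grad[of 0 1 1 "-1"] grad[of 0 1 1 0] grad[of 0 1 1 1]
  have "\<forall>(i,j,k,l)\<in>monomials_deg 6. i = 0 \<longrightarrow> cf (i,j,k,l) = cf (0,0,0,6) * sq_coeff g4_coeff (i,j,k,l)"
    using eqs[simplified] unfolding ball_monomials_deg
    by (simp (no_asm) add: sq_coeff_def g4_coeff_def del: Ball_def) (intro conjI; argo)
  from bspec[OF this, of "(0,j,k,l)"] assms(2) show ?thesis
    by (simp add: monomials_deg_def)
qed

lemma nonneg_sextic_coeffs_interior:
  assumes "nonneg_sextic_with_g4_sq_zeros g cf"
    and boundary: "\<forall>(i,j,k,l)\<in>monomials_deg 6. i = 0 \<or> j = 0 \<or> k = 0 \<or> l = 0 \<longrightarrow>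
                     cf (i,j,k,l) = t * sq_coeff g4_coeff (i,j,k,l)"
  shows "\<forall>m\<in>monomials_deg 6. cf m = t * sq_coeff g4_coeff m"
proof -
  note grad = nonneg_form_grad_zero[OF nonneg_sextic_with_g4_sq_zerosD[OF assms(1)]]
  note [simp] = g4_defs sum_monomials_deg atMost_nat_numeral atMost_Suc
  note boundary_coeffs = boundary[unfolded ball_monomials_deg, simplified sq_coeff_def g4_coeff_def, simplified]
  \<comment> \<open>at zeros with one vanishing coordinate, differentiate in that coordinate\<close>
  note eqs = grad(1)[of 0 1 "-1" "-1"] grad(1)[of 0 1 "-1" 1] grad(1)[of 0 1 1 "-1"] grad(1)[of 0 1 1 1]
      grad(4)[of 1 "-1" "-1" 0] grad(3)[of 1 "-1" 0 "-1"] grad(3)[of 1 "-1" 0 1] grad(4)[of 1 "-1" 1 0]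
      grad(2)[of 1 0 "-1" "-1"] grad(2)[of 1 0 "-1" 1] grad(2)[of 1 0 1 "-1"] grad(2)[of 1 0 1 1]
      grad(4)[of 1 1 "-1" 0] grad(3)[of 1 1 0 "-1"] grad(3)[of 1 1 0 1] grad(4)[of 1 1 1 0]
  show ?thesis
    using eqs[simplified] boundary_coeffs unfolding ball_monomials_deg
    by (simp (no_asm) add: sq_coeff_def g4_coeff_def del: Ball_def) (intro conjI; argo)
qed

lemma nonneg_sextic_coeffs:
  assumes "nonneg_sextic_with_g4_sq_zeros g cf"
  shows "\<forall>m\<in>monomials_deg 6. cf m = cf (6,0,0,0) * sq_coeff g4_coeff m"
proof -
  let ?c = "sq_coeff g4_coeff"
  note swap = nonneg_sextic_with_g4_sq_zeros_swap[OF assms]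
  note face_a = nonneg_sextic_coeffs_a_free[OF assms]
    and face_b = nonneg_sextic_coeffs_a_free[OF swap(1), simplified]
    and face_c = nonneg_sextic_coeffs_a_free[OF swap(2), simplified]
    and face_d = nonneg_sextic_coeffs_a_free[OF swap(3), simplified]
  have scale: "cf (6,0,0,0) = cf (0,0,0,6)"
    using face_b[of 6 0 0] by (simp add: sq_coeff_def g4_coeff_def)
  have boundary: "cf (i,j,k,l) = cf (6,0,0,0) * ?c (i,j,k,l)"
    if "i + j + k + l = 6" "i = 0 \<or> j = 0 \<or> k = 0 \<or> l = 0" for i j k l
    using that(2)
  proof (elim disjE)
    assume "i = 0" then show ?thesis
      using face_a[of j k l] that(1) scale by simp
  next
    assume "j = 0" then show ?thesis
      using face_b[of i k l] sq_coeff_g4_coeff_swap(1)[of i j k l] that(1) scale by simp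
  next
    assume "k = 0" then show ?thesis
      using face_c[of j i l] sq_coeff_g4_coeff_swap(2)[of i j k l] that(1) scale by simp
  next
    assume "l = 0" then show ?thesis
      using face_d[of j k i] sq_coeff_g4_coeff_swap(3)[of i j k l] that(1) by simp
  qed
  have "\<forall>(i,j,k,l)\<in>monomials_deg 6. i = 0 \<or> j = 0 \<or> k = 0 \<or> l = 0 \<longrightarrow>
      cf (i,j,k,l) = cf (6,0,0,0) * ?c (i,j,k,l)"
    unfolding monomials_deg_def using boundary by blast
  then show ?thesis
    using nonneg_sextic_coeffs_interior[OF assms] by blast
qed

lemma cubic_vanishing_on_g4_sq_zeros:
  assumes "is_form 3 q"
    and zeros: "\<And>a b c d. g4 (a^2) (b^2) (c^2) (d^2) = 0 \<Longrightarrow> q a b c d = 0"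
  shows "q 1 0 0 0 = 0"
proof -
  obtain cf where Q: "\<And>a b c d. q a b c d = (\<Sum>(i,j,k,l)\<in>monomials_deg 3. cf (i,j,k,l) * a^i * b^j * c^k * d^l)"
    using assms(1) unfolding is_form_def by blast
  note [simp] = Q g4_defs sum_monomials_deg atMost_nat_numeral atMost_Suc
  \<comment> \<open>all zeros of \<open>g4 (a^2) (b^2) (c^2) (d^2)\<close>, up to sign\<close>
  note eqs = zeros[of 0 0 1 "-1"] zeros[of 0 0 1 1] zeros[of 0 1 "-1" "-1"] zeros[of 0 1 "-1" 0] zeros[of 0 1 "-1" 1]
      zeros[of 0 1 0 "-1"] zeros[of 0 1 0 1] zeros[of 0 1 1 "-1"] zeros[of 0 1 1 0] zeros[of 0 1 1 1]
      zeros[of 1 "-1" "-1" 0] zeros[of 1 "-1" 0 "-1"] zeros[of 1 "-1" 0 0] zeros[of 1 "-1" 0 1] zeros[of 1 "-1" 1 0]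
      zeros[of 1 0 "-1" "-1"] zeros[of 1 0 "-1" 0] zeros[of 1 0 "-1" 1] zeros[of 1 0 0 "-1"] zeros[of 1 0 0 1]
      zeros[of 1 0 1 "-1"] zeros[of 1 0 1 0] zeros[of 1 0 1 1] zeros[of 1 1 "-1" 0] zeros[of 1 1 0 "-1"]
      zeros[of 1 1 0 0] zeros[of 1 1 0 1] zeros[of 1 1 1 0]
  have "cf (3,0,0,0) = 0"
    using eqs[simplified] by argo
  then show ?thesis
    by simp
qed

lemma form_eq_scaled:
  fixes cp cq :: "nat \<times> nat \<times> nat \<times> nat \<Rightarrow> real"
  assumes "\<And>a b c d. p a b c d = (\<Sum>(i,j,k,l)\<in>M. cp (i,j,k,l) * a^i * b^j * c^k * d^l)"
    and "\<And>a b c d. q a b c d = (\<Sum>(i,j,k,l)\<in>M. cq (i,j,k,l) * a^i * b^j * c^k * d^l)"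
    and "\<forall>m\<in>M. cp m = t * cq m"
  shows "p = (\<lambda>a b c d. t * q a b c d)"
  using assms by (auto simp: sum_distrib_left mult_ac intro!: ext sum.cong)

lemma is_form_g4: "is_form 3 g4"
  unfolding is_form_def using g4_eq_sum by blast

lemma g4_sq_in_P46: "(\<lambda>a b c d. g4 (a^2) (b^2) (c^2) (d^2)) \<in> P46"
  using is_form_squares[OF is_form_g4] by (simp add: P46_def g4_nonneg)

lemma P46_vanishing_on_g4_sq_zeros:
  assumes "g \<in> P46"
    and zeros: "\<And>a b c d. g4 (a^2) (b^2) (c^2) (d^2) = 0 \<Longrightarrow> g a b c d = 0"
  shows "\<exists>t\<ge>0. g = (\<lambda>a b c d. t * g4 (a^2) (b^2) (c^2) (d^2))"
proof -
  obtain cf where G: "\<And>a b c d. g a b c d = (\<Sum>(i,j,k,l)\<in>monomials_deg 6. cf (i,j,k,l) * a^i * b^j * c^k * d^l)"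
    using assms(1) unfolding P46_def is_form_def by blast
  have nonneg: "0 \<le> g a b c d" for a b c d
    using assms(1) by (simp add: P46_def)
  have "nonneg_sextic_with_g4_sq_zeros g cf"
    unfolding nonneg_sextic_with_g4_sq_zeros_def using G nonneg zeros by blast
  then have g: "g = (\<lambda>a b c d. cf (6,0,0,0) * g4 (a^2) (b^2) (c^2) (d^2))"
    using form_eq_scaled[OF G g4_sq_eq_sum nonneg_sextic_coeffs] by blast
  have "0 \<le> cf (6,0,0,0)"
    using nonneg[of 1 0 0 0] by (simp add: g g4_defs)
  with g show ?thesis by blast
qed

lemma extremalsI:
  assumes "f \<in> K" "f \<noteq> (\<lambda>a b c d. 0)"
    and part: "\<And>g h. g \<in> K \<Longrightarrow> h \<in> K \<Longrightarrow> f = (\<lambda>a b c d. g a b c d + h a b c d)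
      \<Longrightarrow> \<exists>t\<ge>0. g = (\<lambda>a b c d. t * f a b c d)"
  shows "f \<in> extremals K"
proof -
  have "\<exists>t\<ge>0. h = (\<lambda>a b c d. t * f a b c d)"
    if "g \<in> K" "h \<in> K" "f = (\<lambda>a b c d. g a b c d + h a b c d)" for g h
    using part[of h g] that by (simp add: add.commute)
  then show ?thesis
    using assms unfolding extremals_def by blast
qed

lemma g4_sq_extremal: "(\<lambda>a b c d. g4 (a^2) (b^2) (c^2) (d^2)) \<in> extremals P46"
proof (rule extremalsI)
  show "(\<lambda>a b c d. g4 (a^2) (b^2) (c^2) (d^2)) \<in> P46"
    by (rule g4_sq_in_P46)
  have "g4 (1^2) (0^2) (0^2) (0^2) \<noteq> 0"
    by (simp add: g4_defs)
  then show "(\<lambda>a b c d. g4 (a^2) (b^2) (c^2) (d^2)) \<noteq> (\<lambda>a b c d. 0)"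
    by (metis (mono_tags))
  fix g h assume "g \<in> P46" "h \<in> P46"
    and decomp: "(\<lambda>a b c d. g4 (a^2) (b^2) (c^2) (d^2)) = (\<lambda>a b c d. g a b c d + h a b c d)"
  have "g a b c d = 0" if "g4 (a^2) (b^2) (c^2) (d^2) = 0" for a b c d
    using that fun_cong[OF fun_cong[OF fun_cong[OF fun_cong[OF decomp]]], of a b c d]
      \<open>g \<in> P46\<close> \<open>h \<in> P46\<close> by (simp add: P46_def add_nonneg_eq_0_iff)
  then show "\<exists>t\<ge>0. g = (\<lambda>a b c d. t * g4 (a^2) (b^2) (c^2) (d^2))"
    using P46_vanishing_on_g4_sq_zeros[OF \<open>g \<in> P46\<close>] by blast
qed

lemma g4_sq_not_SOS: "(\<lambda>a b c d. g4 (a^2) (b^2) (c^2) (d^2)) \<notin> Sigma46"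
proof
  assume "(\<lambda>a b c d. g4 (a^2) (b^2) (c^2) (d^2)) \<in> Sigma46"
  then obtain qs where cubic: "\<forall>q\<in>set qs. is_form 3 q"
    and "(\<lambda>a b c d. g4 (a^2) (b^2) (c^2) (d^2)) = (\<lambda>a b c d. \<Sum>q\<leftarrow>qs. (q a b c d)^2)"
    unfolding Sigma46_def by blast
  then have sos: "g4 (a^2) (b^2) (c^2) (d^2) = (\<Sum>q\<leftarrow>qs. (q a b c d)^2)" for a b c d
    by (simp add: fun_eq_iff)
  have "q a b c d = 0" if "q \<in> set qs" "g4 (a^2) (b^2) (c^2) (d^2) = 0" for q a b c d
  proof -
    have "sum_list (map (\<lambda>q. (q a b c d)^2) qs) = 0"
      using that(2) sos by simp
    then have "\<forall>x\<in>set (map (\<lambda>q. (q a b c d)^2) qs). x = 0"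
      by (subst (asm) sum_list_nonneg_eq_0_iff) auto
    then show ?thesis
      using that(1) by simp
  qed
  then have "q 1 0 0 0 = 0" if "q \<in> set qs" for q
    using cubic_vanishing_on_g4_sq_zeros cubic that by blast
  then have "(\<Sum>q\<leftarrow>qs. (q 1 0 0 0)^2) = (\<Sum>q\<leftarrow>qs. 0)"
    by (intro arg_cong[where f=sum_list] map_cong) auto
  then show False
    using sos[of 1 0 0 0] by (simp add: g4_defs)
qed

lemma g4_in_P43plus: "g4 \<in> P43plus"
  by (simp add: P43plus_def is_form_g4 g4_nonneg)

lemma g4_extremal: "g4 \<in> extremals P43plus"
proof (rule extremalsI)
  show "g4 \<in> P43plus"
    by (rule g4_in_P43plus)
  have "g4 1 0 0 0 \<noteq> 0"
    by (simp add: g4_defs)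
  then show "g4 \<noteq> (\<lambda>a b c d. 0)"
    by (metis (mono_tags))
  fix g h assume "g \<in> P43plus" "h \<in> P43plus" and decomp: "g4 = (\<lambda>a b c d. g a b c d + h a b c d)"
  obtain cf where G: "\<And>a b c d. g a b c d = (\<Sum>(i,j,k,l)\<in>monomials_deg 3. cf (i,j,k,l) * a^i * b^j * c^k * d^l)"
    using \<open>g \<in> P43plus\<close> unfolding P43plus_def is_form_def by blast
  have G_sq: "g (a^2) (b^2) (c^2) (d^2)
      = (\<Sum>(i,j,k,l)\<in>monomials_deg 6. sq_coeff cf (i,j,k,l) * a^i * b^j * c^k * d^l)" for a b c d
    using sum_sq_coeff[where cf=cf and n=3] by (simp add: G)
  have nonneg: "0 \<le> g (a^2) (b^2) (c^2) (d^2)" for a b c d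
    using \<open>g \<in> P43plus\<close> by (simp add: P43plus_def)
  have "0 \<le> h (a^2) (b^2) (c^2) (d^2)" for a b c d
    using \<open>h \<in> P43plus\<close> by (simp add: P43plus_def)
  moreover have "g4 a b c d = g a b c d + h a b c d" for a b c d
    using decomp by (metis (mono_tags))
  ultimately have zeros: "g (a^2) (b^2) (c^2) (d^2) = 0" if "g4 (a^2) (b^2) (c^2) (d^2) = 0" for a b c d
    using that nonneg by (metis add_nonneg_eq_0_iff)
  have "nonneg_sextic_with_g4_sq_zeros (\<lambda>a b c d. g (a^2) (b^2) (c^2) (d^2)) (sq_coeff cf)"
    unfolding nonneg_sextic_with_g4_sq_zeros_def using G_sq nonneg zeros by blast
  note sq_coeffs = nonneg_sextic_coeffs[OF this]
  have "\<forall>m\<in>monomials_deg 3. cf m = cf (3,0,0,0) * g4_coeff m"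
  proof
    fix m assume "m \<in> monomials_deg 3"
    then obtain i j k l where "m = (i,j,k,l)" "(2*i, 2*j, 2*k, 2*l) \<in> monomials_deg 6"
      by (cases m) (auto simp: monomials_deg_def)
    with sq_coeffs show "cf m = cf (3,0,0,0) * g4_coeff m"
      by (auto simp: sq_coeff_def)
  qed
  from form_eq_scaled[OF G g4_eq_sum this]
  have g: "g = (\<lambda>a b c d. cf (3,0,0,0) * g4 a b c d)" .
  have "0 \<le> cf (3,0,0,0)"
    using nonneg[of 1 0 0 0] by (simp add: g g4_defs)
  with g show "\<exists>t\<ge>0. g = (\<lambda>a b c d. t * g4 a b c d)" by blast
qed

theorem theorem2p10:
  shows "(\<lambda>a b c d. g4 (a^2) (b^2) (c^2) (d^2)) \<in> extremals P46 - Sigma46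
         \<and> g4 \<in> extremals P43plus"
  using g4_sq_extremal g4_sq_not_SOS g4_extremal by blast

end
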